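(* Let $(L,\le,\wedge,\vee,0,1,{}^\perp)$ be a complete orthocomplemented lattice. Then $(\mathrm{Sub}_{\mathrm{clop}}(\Sigma^L),\le,\wedge,\vee,{}^\bullet)$ is a De Morgan algebra if and only if $(\mathrm{Sub}_{\mathrm{clop}}(\Sigma^L),\le,\wedge,\vee,\varnothing,\Sigma^L,{}^\bullet)$ is a boolean lattice; likewise $(\mathrm{Sub}_{\mathrm{clop}}(\Sigma^L),\le,\wedge,\vee,{}^\circ)$ is a De Morgan algebra if and only if $(\mathrm{Sub}_{\mathrm{clop}}(\Sigma^L),\le,\wedge,\vee,\varnothing,\Sigma^L,{}^\circ)$ is a boolean lattice.
   Context: Let $(L,\le,\wedge,\vee,0,1,{}^\perp)$ be a complete orthocomplemented lattice (bounded lattice with ${}^\perp$ antitone, $x^{\perp\perp}=x$, $x\wedge x^\perp=0$, $x\vee x^\perp=1$, all subsets having meets and joins). $\mathcal{V}_c(L)$ is the set of complete boolean sublattices of $L$ (containing $0,1$, closed under ${}^\perp$ and arbitrary meets and joins of $L$), other than $\{0,1\}$, ordered by inclusion. For a boolean lattice $V$, $\mathrm{sp}(V)$ is its Stone spectrum (boolean homomorphisms $V\to\{0,1\}$) with the Stone topology with basis $\varkappa_V(a):=\{\xi\in\mathrm{sp}(V)\mid\xi(a)=1\}$, $a\in V$. The spectral presheaf $\Sigma^L$ sends $V\mapsto\mathrm{sp}(V)$ and $V\subseteq W$ to restriction $\lambda\mapsto\lambda|_V$. $\mathrm{Sub}_{\mathrm{clop}}(\Sigma^L)$: subpresheaves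 $S$ with each $S_V$ clopen; complete distributive lattice with componentwise inclusion order, bottom $\varnothing$, top $\Sigma^L$, $(\bigwedge_i S^i)_V=\mathrm{int}(\bigcap_i S^i_V)$, $(\bigvee_i S^i)_V=\mathrm{cl}(\bigcup_i S^i_V)$. Daseinisations: $\delta^\wedge(a)_V:=\varkappa_V(\bigwedge\{b\in V\mid a\le b\})$, $\delta^\vee(a)_V:=\varkappa_V(\bigvee\{b\in V\mid b\le a\})$; $\varepsilon^\wedge(S):=\bigvee\{a\in L\mid\delta^\wedge(a)\le S\}$, $\varepsilon^\vee(S):=\bigwedge\{a\in L\mid S\le\delta^\vee(a)\}$; $S^\bullet:=\delta^\wedge((\varepsilon^\wedge(S))^\perp)$, $S^\circ:=\delta^\vee((\varepsilon^\vee(S))^\perp)$. A De Morgan algebra is a distributive lattice with a map ${}^\neg$ that is an involution: $x\le y\Rightarrow y^\neg\le x^\neg$, $x\le x^{\neg\neg}$, $x^{\neg\neg}\le x$. A boolean lattice is a bounded distributive lattice with an orthocomplementation (antitone, $x^{\neg\neg}=x$, $x\wedge x^\neg=0$, $x\vee x^\neg=1$). *)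

theory Defs
  imports "HOL-Analysis.Abstract_Topology"
begin

definition ortho_compl :: "('a::complete_lattice \<Rightarrow> 'a) \<Rightarrow> bool" where
  "ortho_compl oc \<longleftrightarrow>
     (\<forall>x y. x \<le> y \<longrightarrow> oc y \<le> oc x) \<and>
     (\<forall>x. oc (oc x) = x) \<and>
     (\<forall>x. inf x (oc x) = bot) \<and>
     (\<forall>x. sup x (oc x) = top)"

definition Vc :: "('a::complete_lattice \<Rightarrow> 'a) \<Rightarrow> 'a set set" where
  "Vc oc = {V. bot \<in> V \<and> top \<in> V \<and>
              (\<forall>x\<in>V. oc x \<in> V) \<and>
              (\<forall>X. X \<subseteq> V \<longrightarrow> Inf X \<in> V \<and> Sup X \<in> V) \<and>
              (\<forall>x\<in>V. \<forall>y\<in>V. \<forall>z\<in>V. inf x (sup y z) = sup (inf x y) (inf x z)) \<and>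
              V \<noteq> {bot, top}}"

text \<open>Boolean homomorphisms V -> {0,1}, represented as predicates that are False outside V.\<close>

definition sp :: "'a::complete_lattice set \<Rightarrow> ('a \<Rightarrow> bool) set" where
  "sp V = {\<xi>. \<not> \<xi> bot \<and> \<xi> top \<and>
             (\<forall>x\<in>V. \<forall>y\<in>V. \<xi> (inf x y) = (\<xi> x \<and> \<xi> y) \<and> \<xi> (sup x y) = (\<xi> x \<or> \<xi> y)) \<and>
             (\<forall>x. x \<notin> V \<longrightarrow> \<not> \<xi> x)}"

definition kappa :: "'a::complete_lattice set \<Rightarrow> 'a \<Rightarrow> ('a \<Rightarrow> bool) set" where
  "kappa V a = {\<xi> \<in> sp V. \<xi> a}"

definition stone_top :: "'a::complete_lattice set \<Rightarrow> ('a \<Rightarrow> bool) topology" where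
  "stone_top V = topology_generated_by (kappa V ` V)"

definition restr :: "'a set \<Rightarrow> ('a \<Rightarrow> bool) \<Rightarrow> ('a \<Rightarrow> bool)" where
  "restr V l = (\<lambda>x. x \<in> V \<and> l x)"

type_synonym 'a presheaf = "'a set \<Rightarrow> ('a \<Rightarrow> bool) set"

text \<open>Presheaves are represented extensionally: empty outside V_c(L).  Order is the
  componentwise inclusion, i.e. the pointwise order on functions.\<close>

definition SubClop :: "('a::complete_lattice \<Rightarrow> 'a) \<Rightarrow> 'a presheaf set" where
  "SubClop oc = {S.
     (\<forall>V. V \<notin> Vc oc \<longrightarrow> S V = {}) \<and>
     (\<forall>V \<in> Vc oc. S V \<subseteq> sp V \<and> openin (stone_top V) (S V) \<and> closedin (stone_top V) (S V)) \<and>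
     (\<forall>V \<in> Vc oc. \<forall>W \<in> Vc oc. V \<subseteq> W \<longrightarrow> (\<forall>l \<in> S W. restr V l \<in> S V))}"

definition ps_bot :: "'a::complete_lattice presheaf" where
  "ps_bot = (\<lambda>V. {})"

definition ps_top :: "('a::complete_lattice \<Rightarrow> 'a) \<Rightarrow> 'a presheaf" where
  "ps_top oc = (\<lambda>V. if V \<in> Vc oc then sp V else {})"

definition ps_meet :: "'a::complete_lattice presheaf \<Rightarrow> 'a presheaf \<Rightarrow> 'a presheaf" where
  "ps_meet S T = (\<lambda>V. (stone_top V) interior_of (S V \<inter> T V))"

definition ps_join :: "'a::complete_lattice presheaf \<Rightarrow> 'a presheaf \<Rightarrow> 'a presheaf" where
  "ps_join S T = (\<lambda>V. (stone_top V) closure_of (S V \<union> T V))"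

definition dasein_out :: "('a::complete_lattice \<Rightarrow> 'a) \<Rightarrow> 'a \<Rightarrow> 'a presheaf" where
  "dasein_out oc a = (\<lambda>V. if V \<in> Vc oc then kappa V (Inf {b \<in> V. a \<le> b}) else {})"

definition dasein_in :: "('a::complete_lattice \<Rightarrow> 'a) \<Rightarrow> 'a \<Rightarrow> 'a presheaf" where
  "dasein_in oc a = (\<lambda>V. if V \<in> Vc oc then kappa V (Sup {b \<in> V. b \<le> a}) else {})"

definition eps_out :: "('a::complete_lattice \<Rightarrow> 'a) \<Rightarrow> 'a presheaf \<Rightarrow> 'a" where
  "eps_out oc S = Sup {a. dasein_out oc a \<le> S}"

definition eps_in :: "('a::complete_lattice \<Rightarrow> 'a) \<Rightarrow> 'a presheaf \<Rightarrow> 'a" where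
  "eps_in oc S = Inf {a. S \<le> dasein_in oc a}"

definition bullet :: "('a::complete_lattice \<Rightarrow> 'a) \<Rightarrow> 'a presheaf \<Rightarrow> 'a presheaf" where
  "bullet oc S = dasein_out oc (oc (eps_out oc S))"

definition circ :: "('a::complete_lattice \<Rightarrow> 'a) \<Rightarrow> 'a presheaf \<Rightarrow> 'a presheaf" where
  "circ oc S = dasein_in oc (oc (eps_in oc S))"

definition lattice_on :: "'b set \<Rightarrow> ('b \<Rightarrow> 'b \<Rightarrow> bool) \<Rightarrow> ('b \<Rightarrow> 'b \<Rightarrow> 'b) \<Rightarrow> ('b \<Rightarrow> 'b \<Rightarrow> 'b) \<Rightarrow> bool" where
  "lattice_on C le meet join \<longleftrightarrow>
     (\<forall>x\<in>C. le x x) \<and>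
     (\<forall>x\<in>C. \<forall>y\<in>C. le x y \<and> le y x \<longrightarrow> x = y) \<and>
     (\<forall>x\<in>C. \<forall>y\<in>C. \<forall>z\<in>C. le x y \<and> le y z \<longrightarrow> le x z) \<and>
     (\<forall>x\<in>C. \<forall>y\<in>C. meet x y \<in> C \<and> le (meet x y) x \<and> le (meet x y) y \<and>
                    (\<forall>z\<in>C. le z x \<and> le z y \<longrightarrow> le z (meet x y))) \<and>
     (\<forall>x\<in>C. \<forall>y\<in>C. join x y \<in> C \<and> le x (join x y) \<and> le y (join x y) \<and>
                    (\<forall>z\<in>C. le x z \<and> le y z \<longrightarrow> le (join x y) z))"

definition distrib_lattice_on :: "'b set \<Rightarrow> ('b \<Rightarrow> 'b \<Rightarrow> bool) \<Rightarrow> ('b \<Rightarrow> 'b \<Rightarrow> 'b) \<Rightarrow> ('b \<Rightarrow> 'b \<Rightarrow> 'b) \<Rightarrow> bool" where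
  "distrib_lattice_on C le meet join \<longleftrightarrow> lattice_on C le meet join \<and>
     (\<forall>x\<in>C. \<forall>y\<in>C. \<forall>z\<in>C. meet x (join y z) = join (meet x y) (meet x z))"

definition de_morgan_algebra :: "'b set \<Rightarrow> ('b \<Rightarrow> 'b \<Rightarrow> bool) \<Rightarrow> ('b \<Rightarrow> 'b \<Rightarrow> 'b) \<Rightarrow> ('b \<Rightarrow> 'b \<Rightarrow> 'b) \<Rightarrow> ('b \<Rightarrow> 'b) \<Rightarrow> bool" where
  "de_morgan_algebra C le meet join neg \<longleftrightarrow> distrib_lattice_on C le meet join \<and>
     (\<forall>x\<in>C. neg x \<in> C) \<and>
     (\<forall>x\<in>C. \<forall>y\<in>C. le x y \<longrightarrow> le (neg y) (neg x)) \<and>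
     (\<forall>x\<in>C. le x (neg (neg x))) \<and>
     (\<forall>x\<in>C. le (neg (neg x)) x)"

definition boolean_lattice_on :: "'b set \<Rightarrow> ('b \<Rightarrow> 'b \<Rightarrow> bool) \<Rightarrow> ('b \<Rightarrow> 'b \<Rightarrow> 'b) \<Rightarrow> ('b \<Rightarrow> 'b \<Rightarrow> 'b) \<Rightarrow> 'b \<Rightarrow> 'b \<Rightarrow> ('b \<Rightarrow> 'b) \<Rightarrow> bool" where
  "boolean_lattice_on C le meet join bt tp neg \<longleftrightarrow> distrib_lattice_on C le meet join \<and>
     bt \<in> C \<and> tp \<in> C \<and> (\<forall>x\<in>C. le bt x \<and> le x tp) \<and>
     (\<forall>x\<in>C. neg x \<in> C) \<and>
     (\<forall>x\<in>C. \<forall>y\<in>C. le x y \<longrightarrow> le (neg y) (neg x)) \<and>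
     (\<forall>x\<in>C. neg (neg x) = x) \<and>
     (\<forall>x\<in>C. meet x (neg x) = bt) \<and>
     (\<forall>x\<in>C. join x (neg x) = tp)"

end

theory Submission
  imports Defs
begin

text \<open>
  A De Morgan negation is an involution, so every clopen subobject lies in its range, i.e. is an
  outer daseinisation (for the bullet) or an inner one (for the circle).  The subobject that is the
  full spectrum exactly on the contexts below a context V1 is of that form only if every context
  lies below V1; hence there is at most one context V0.  Over a single context, a clopen subobject
  is a Stone set \<open>\<kappa>(x)\<close> with x in V0.  By the prime filter theorem the Stone map is an order
  embedding, so the daseinisation adjoints send \<open>\<kappa>(x)\<close> back to x and the negation sends it to
  \<open>\<kappa>(x\<^sup>\<perp>)\<close>, the set-theoretic complement: the complement laws hold.
\<close>

lemma de_morgan_algebra_involutive: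
  assumes DM: "de_morgan_algebra C le meet join neg" and x: "x \<in> C"
  shows "neg (neg x) = x"
proof -
  have "lattice_on C le meet join"
    using DM unfolding de_morgan_algebra_def distrib_lattice_on_def by (elim conjE)
  then have antisym: "\<forall>x\<in>C. \<forall>y\<in>C. le x y \<and> le y x \<longrightarrow> x = y"
    unfolding lattice_on_def by (elim conjE)
  have "neg (neg x) \<in> C" "le x (neg (neg x))" "le (neg (neg x)) x"
    using DM x unfolding de_morgan_algebra_def by simp_all
  then show ?thesis using antisym x by simp
qed

lemma de_morgan_algebra_if_boolean_lattice_on:
  assumes B: "boolean_lattice_on C le meet join bt tp neg"
  shows "de_morgan_algebra C le meet join neg"
proof -
  have "\<forall>x\<in>C. le x x"
    using B unfolding boolean_lattice_on_def distrib_lattice_on_def lattice_on_def by simp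
  moreover have "\<forall>x\<in>C. neg (neg x) = x" using B unfolding boolean_lattice_on_def by simp
  ultimately show ?thesis using B unfolding boolean_lattice_on_def de_morgan_algebra_def by simp
qed

definition proper_filter :: "'a::complete_lattice set \<Rightarrow> 'a set \<Rightarrow> bool" where
  "proper_filter V F \<longleftrightarrow> F \<subseteq> V \<and> top \<in> F \<and> bot \<notin> F \<and>
     (\<forall>x\<in>F. \<forall>y\<in>F. inf x y \<in> F) \<and> (\<forall>x\<in>F. \<forall>y\<in>V. x \<le> y \<longrightarrow> y \<in> F)"

lemma proper_filterD:
  assumes "proper_filter V F"
  shows "F \<subseteq> V" "top \<in> F" "bot \<notin> F" "x \<in> F \<Longrightarrow> y \<in> F \<Longrightarrow> inf x y \<in> F"
    "x \<in> F \<Longrightarrow> y \<in> V \<Longrightarrow> x \<le> y \<Longrightarrow> y \<in> F"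
  using assms unfolding proper_filter_def by auto

lemma sp_inf:
  assumes "\<xi> \<in> sp V" "x \<in> V" "y \<in> V"
  shows "\<xi> (inf x y) \<longleftrightarrow> \<xi> x \<and> \<xi> y"
  using assms unfolding sp_def by auto

lemma kappa_inf:
  assumes "x \<in> V" "y \<in> V"
  shows "kappa V (inf x y) = kappa V x \<inter> kappa V y"
  using sp_inf[OF _ assms] unfolding kappa_def by auto

lemma kappa_mono:
  assumes "x \<in> V" "y \<in> V" "x \<le> y"
  shows "kappa V x \<subseteq> kappa V y"
  using kappa_inf[OF assms(1,2)] inf.absorb1[OF assms(3)] by auto

lemma kappa_bot: "kappa V bot = {}"
  unfolding kappa_def sp_def by auto

lemma kappa_top: "kappa V top = sp V"
  unfolding kappa_def sp_def by auto

lemma topspace_stone_top: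
  assumes "top \<in> V"
  shows "topspace (stone_top V) = sp V"
  using assms kappa_top unfolding stone_top_def kappa_def by auto

locale bounded_distrib_sublattice =
  fixes V :: "'a::complete_lattice set"
  assumes bot_mem: "bot \<in> V" and top_mem: "top \<in> V"
    and inf_mem: "x \<in> V \<Longrightarrow> y \<in> V \<Longrightarrow> inf x y \<in> V"
    and sup_mem: "x \<in> V \<Longrightarrow> y \<in> V \<Longrightarrow> sup x y \<in> V"
    and distrib: "x \<in> V \<Longrightarrow> y \<in> V \<Longrightarrow> z \<in> V \<Longrightarrow> inf x (sup y z) = sup (inf x y) (inf x z)"
begin

lemma ex_maximal_proper_filter:
  assumes z: "z \<in> V" "z \<noteq> bot"
  obtains F where "proper_filter V F" "z \<in> F" "\<And>G. proper_filter V G \<Longrightarrow> F \<subseteq> G \<Longrightarrow> G = F"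
proof -
  let ?A = "{F. proper_filter V F \<and> z \<in> F}"
  have "{y \<in> V. z \<le> y} \<in> ?A"
    using z top_mem inf_mem bot.extremum_unique unfolding proper_filter_def by (auto intro: order_trans)
  moreover have "\<Union>C \<in> ?A" if C: "C \<noteq> {}" "subset.chain ?A C" for C
  proof -
    have CA: "\<And>F. F \<in> C \<Longrightarrow> proper_filter V F" "\<And>F. F \<in> C \<Longrightarrow> z \<in> F"
      and ch: "\<And>F G. F \<in> C \<Longrightarrow> G \<in> C \<Longrightarrow> F \<subseteq> G \<or> G \<subseteq> F"
      using C(2) unfolding subset.chain_def by auto
    have "proper_filter V (\<Union>C)" unfolding proper_filter_def
    proof (intro conjI ballI impI)
      show "\<Union>C \<subseteq> V" using CA(1) proper_filterD(1) by blast
      show "bot \<notin> \<Union>C" using CA(1) unfolding proper_filter_def by blast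
      show "top \<in> \<Union>C" using CA(1) C(1) unfolding proper_filter_def by blast
    next
      fix x y assume "x \<in> \<Union>C" "y \<in> \<Union>C"
      then obtain F G where FG: "F \<in> C" "x \<in> F" "G \<in> C" "y \<in> G" by blast
      then have "\<exists>H\<in>C. x \<in> H \<and> y \<in> H" using ch[OF FG(1) FG(3)] by blast
      then show "inf x y \<in> \<Union>C" using CA(1) unfolding proper_filter_def by blast
    next
      fix x y assume "x \<in> \<Union>C" "y \<in> V" "x \<le> y"
      then show "y \<in> \<Union>C" using CA(1) unfolding proper_filter_def by blast
    qed
    moreover have "z \<in> \<Union>C" using CA(2) C(1) by blast
    ultimately show ?thesis by simp
  qed
  ultimately have "\<exists>F\<in>?A. \<forall>G\<in>?A. F \<subseteq> G \<longrightarrow> G = F"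
    by (intro subset_Zorn_nonempty) blast+
  then show thesis using that by auto
qed

lemma maximal_proper_filter_disjoint:
  assumes F: "proper_filter V F" and max: "\<And>G. proper_filter V G \<Longrightarrow> F \<subseteq> G \<Longrightarrow> G = F"
    and x: "x \<in> V" "x \<notin> F"
  shows "\<exists>f\<in>F. inf f x = bot"
proof (rule ccontr)
  assume disj: "\<not> (\<exists>f\<in>F. inf f x = bot)"
  define G where "G = {w \<in> V. \<exists>f\<in>F. inf f x \<le> w}"
  have "proper_filter V G" unfolding proper_filter_def
  proof (intro conjI ballI impI)
    show "G \<subseteq> V" "top \<in> G" using F top_mem unfolding G_def proper_filter_def by auto
    show "bot \<notin> G" using disj bot.extremum_unique unfolding G_def by auto
  next
    fix a b assume "a \<in> G" "b \<in> G"
    then obtain f g where "a \<in> V" "f \<in> F" "inf f x \<le> a" "b \<in> V" "g \<in> F" "inf g x \<le> b"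
      unfolding G_def by auto
    moreover have "inf (inf f g) x \<le> inf a b"
      using calculation by (meson inf_le1 inf_le2 le_inf_iff order_trans)
    ultimately show "inf a b \<in> G" using F inf_mem unfolding G_def proper_filter_def by blast
  qed (auto simp: G_def intro: order_trans)
  moreover have "F \<subseteq> G" using F unfolding G_def proper_filter_def by (auto intro: le_infI1)
  moreover have "x \<in> G" using F x unfolding G_def proper_filter_def by (auto intro!: bexI[of _ top])
  ultimately show False using max x by blast
qed

lemma maximal_proper_filter_prime:
  assumes F: "proper_filter V F" and max: "\<And>G. proper_filter V G \<Longrightarrow> F \<subseteq> G \<Longrightarrow> G = F"
    and x: "x \<in> V" and y: "y \<in> V" and xy: "sup x y \<in> F"
  shows "x \<in> F \<or> y \<in> F"
proof (rule ccontr)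
  assume "\<not> (x \<in> F \<or> y \<in> F)"
  then obtain f g where f: "f \<in> F" "inf f x = bot" and g: "g \<in> F" "inf g y = bot"
    using maximal_proper_filter_disjoint[OF F max] x y by blast
  have fg: "inf f g \<in> V" "inf f g \<in> F" using F f g inf_mem unfolding proper_filter_def by auto
  have "inf (inf f g) (sup x y) = sup (inf (inf f g) x) (inf (inf f g) y)"
    using distrib[OF fg(1) x y] .
  also have "\<dots> = bot"
  proof -
    have "inf (inf f g) x \<le> inf f x" "inf (inf f g) y \<le> inf g y"
      by (simp_all add: inf.coboundedI1 inf.coboundedI2 inf_mono)
    then show ?thesis using f(2) g(2) by (simp add: bot_unique)
  qed
  finally show False using F fg(2) xy unfolding proper_filter_def by metis
qed

lemma ex_sp_of_ne_bot:
  assumes z: "z \<in> V" "z \<noteq> bot"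
  shows "\<exists>\<xi>\<in>sp V. \<xi> z"
proof -
  obtain F where F: "proper_filter V F" "z \<in> F"
    and max: "\<And>G. proper_filter V G \<Longrightarrow> F \<subseteq> G \<Longrightarrow> G = F"
    using ex_maximal_proper_filter[OF z] by blast
  have "(\<lambda>x. x \<in> F) \<in> sp V"
    unfolding sp_def mem_Collect_eq
  proof (intro conjI ballI allI impI)
    show "bot \<notin> F" "top \<in> F" using proper_filterD(2,3)[OF F(1)] by auto
  next
    fix x y assume x: "x \<in> V" and y: "y \<in> V"
    show "(inf x y \<in> F) = (x \<in> F \<and> y \<in> F)"
      using proper_filterD(4,5)[OF F(1)] x y inf_mem by (meson inf_le1 inf_le2)
    show "(sup x y \<in> F) = (x \<in> F \<or> y \<in> F)"
      using maximal_proper_filter_prime[OF F(1) max x y] proper_filterD(5)[OF F(1)] x y sup_mem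
      by (meson sup_ge1 sup_ge2)
  next
    fix x assume "x \<notin> V"
    then show "x \<notin> F" using proper_filterD(1)[OF F(1)] by (meson subsetD)
  qed
  then show ?thesis using F(2) by (intro bexI[where x = "\<lambda>x. x \<in> F"]) simp_all
qed

lemma kappa_eq_empty_iff:
  assumes "x \<in> V"
  shows "kappa V x = {} \<longleftrightarrow> x = bot"
  using ex_sp_of_ne_bot[OF assms] kappa_bot unfolding kappa_def by auto

lemma sp_ne_empty:
  assumes "(bot::'a) \<noteq> top"
  shows "sp V \<noteq> {}"
  using kappa_eq_empty_iff[OF top_mem] assms kappa_top by auto

lemma restr_in_sp:
  assumes VW: "V \<subseteq> W" and l: "l \<in> sp W"
  shows "restr V l \<in> sp V"
  unfolding sp_def mem_Collect_eq
proof (intro conjI ballI allI impI)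
  fix x y assume x: "x \<in> V" and y: "y \<in> V"
  have "x \<in> W" "y \<in> W" using VW x y by auto
  then have "l (inf x y) = (l x \<and> l y)" "l (sup x y) = (l x \<or> l y)"
    using l unfolding sp_def by auto
  then show "restr V l (inf x y) = (restr V l x \<and> restr V l y)"
    "restr V l (sup x y) = (restr V l x \<or> restr V l y)"
    using x y inf_mem sup_mem unfolding restr_def by auto
qed (use l top_mem in \<open>auto simp: sp_def restr_def\<close>)

end

lemma Vc_memD:
  assumes "V \<in> Vc oc"
  shows "bot \<in> V" "top \<in> V" "x \<in> V \<Longrightarrow> oc x \<in> V"
    "X \<subseteq> V \<Longrightarrow> Inf X \<in> V" "X \<subseteq> V \<Longrightarrow> Sup X \<in> V"
    "x \<in> V \<Longrightarrow> y \<in> V \<Longrightarrow> z \<in> V \<Longrightarrow> inf x (sup y z) = sup (inf x y) (inf x z)"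
    "V \<noteq> {bot, top}"
  using assms unfolding Vc_def by simp_all

lemma Vc_bounded_distrib_sublattice:
  assumes "V \<in> Vc oc"
  shows "bounded_distrib_sublattice V"
proof
  show "inf x y \<in> V" "sup x y \<in> V" if "x \<in> V" "y \<in> V" for x y
    using Vc_memD(4,5)[OF assms, of "{x, y}"] that by simp_all
qed (use Vc_memD[OF assms] in auto)

lemma Vc_bot_neq_top:
  assumes "(V::'a::complete_lattice set) \<in> Vc oc"
  shows "(bot::'a) \<noteq> top"
proof -
  have "\<not> V \<subseteq> {bot, top}"
    using Vc_memD(1,2,7)[OF assms] by (metis insert_subsetI empty_subsetI subset_antisym)
  then obtain x where "x \<in> V" "x \<noteq> bot" "x \<noteq> top" by (auto simp: subset_iff)
  then show ?thesis by (metis bot_unique top_greatest)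
qed

lemma ortho_complD:
  assumes "ortho_compl oc"
  shows "inf x (oc x) = bot" "sup x (oc x) = top"
  using assms unfolding ortho_compl_def by blast+

lemma kappa_oc:
  assumes oc: "ortho_compl oc" and V: "V \<in> Vc oc" and x: "x \<in> V"
  shows "kappa V (oc x) = sp V - kappa V x"
proof -
  have "\<xi> (oc x) \<longleftrightarrow> \<not> \<xi> x" if "\<xi> \<in> sp V" for \<xi>
  proof -
    have "\<xi> (inf x (oc x)) = (\<xi> x \<and> \<xi> (oc x))" "\<xi> (sup x (oc x)) = (\<xi> x \<or> \<xi> (oc x))"
      using that x Vc_memD(3)[OF V x] unfolding sp_def by auto
    moreover have "\<not> \<xi> bot" "\<xi> top" using that unfolding sp_def by auto
    ultimately show ?thesis using ortho_complD[OF oc, of x] by auto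
  qed
  then show ?thesis unfolding kappa_def by auto
qed

lemma kappa_subset_kappa_iff:
  assumes oc: "ortho_compl oc" and V: "V \<in> Vc oc" and x: "x \<in> V" and y: "y \<in> V"
  shows "kappa V x \<subseteq> kappa V y \<longleftrightarrow> x \<le> y"
proof
  assume sub: "kappa V x \<subseteq> kappa V y"
  interpret bounded_distrib_sublattice V by (rule Vc_bounded_distrib_sublattice[OF V])
  have oy: "oc y \<in> V" using Vc_memD(3)[OF V y] .
  have "kappa V (inf x (oc y)) = kappa V x \<inter> (sp V - kappa V y)"
    using kappa_inf[OF x oy] kappa_oc[OF oc V y] by simp
  also have "\<dots> = {}" using sub by auto
  finally have "inf x (oc y) = bot" using kappa_eq_empty_iff[OF inf_mem[OF x oy]] by simp
  then have "x = inf x y"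
    using distrib[OF x y oy] ortho_complD(2)[OF oc, of y] by simp
  then show "x \<le> y" by (metis inf.cobounded2)
qed (rule kappa_mono[OF x y])

lemma Inf_above_eq:
  fixes x :: "'a::complete_lattice"
  shows "x \<in> V \<Longrightarrow> Inf {b \<in> V. x \<le> b} = x"
  by (rule antisym) (auto intro: Inf_lower Inf_greatest)

lemma Sup_below_eq:
  fixes x :: "'a::complete_lattice"
  shows "x \<in> V \<Longrightarrow> Sup {b \<in> V. b \<le> x} = x"
  by (rule antisym) (auto intro: Sup_upper Sup_least)

lemma dasein_out_eq_kappa:
  assumes "V \<in> Vc oc" "a \<in> V"
  shows "dasein_out oc a V = kappa V a"
  using assms unfolding dasein_out_def by (simp add: Inf_above_eq)

lemma dasein_in_eq_kappa:
  assumes "V \<in> Vc oc" "a \<in> V"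
  shows "dasein_in oc a V = kappa V a"
  using assms unfolding dasein_in_def by (simp add: Sup_below_eq)

lemma dasein_out_at_context:
  assumes "V \<in> Vc oc"
  obtains x where "x \<in> V" "dasein_out oc a V = kappa V x"
  by (rule that[OF Vc_memD(4)[OF assms Collect_restrict]]) (simp add: assms dasein_out_def)

lemma dasein_in_at_context:
  assumes "V \<in> Vc oc"
  obtains x where "x \<in> V" "dasein_in oc a V = kappa V x"
  by (rule that[OF Vc_memD(5)[OF assms Collect_restrict]]) (simp add: assms dasein_in_def)

lemma eps_out_single_context:
  assumes oc: "ortho_compl oc" and Vc: "Vc oc = {V0}" and x: "x \<in> V0"
    and S: "S V0 = kappa V0 x"
  shows "eps_out oc S = x"
  unfolding eps_out_def
proof (rule antisym)
  have V0: "V0 \<in> Vc oc" using Vc by simp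
  show "Sup {a. dasein_out oc a \<le> S} \<le> x"
  proof (rule Sup_least)
    fix a assume "a \<in> {a. dasein_out oc a \<le> S}"
    then have "kappa V0 (Inf {b \<in> V0. a \<le> b}) \<subseteq> kappa V0 x"
      using le_funD[of "dasein_out oc a" S V0] V0 S unfolding dasein_out_def by simp
    then have "Inf {b \<in> V0. a \<le> b} \<le> x"
      using kappa_subset_kappa_iff[OF oc V0 Vc_memD(4)[OF V0 Collect_restrict] x] by simp
    moreover have "a \<le> Inf {b \<in> V0. a \<le> b}" by (rule Inf_greatest) simp
    ultimately show "a \<le> x" by (rule order_trans[rotated])
  qed
  have "dasein_out oc x \<le> S"
  proof (rule le_funI)
    fix V show "dasein_out oc x V \<le> S V"
      using Vc S dasein_out_eq_kappa[OF V0 x] by (cases "V = V0") (auto simp: dasein_out_def)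
  qed
  then show "x \<le> Sup {a. dasein_out oc a \<le> S}" by (simp add: Sup_upper)
qed

lemma eps_in_single_context:
  assumes oc: "ortho_compl oc" and Vc: "Vc oc = {V0}" and x: "x \<in> V0"
    and S: "S V0 = kappa V0 x" and S_outside: "\<And>V. V \<noteq> V0 \<Longrightarrow> S V = {}"
  shows "eps_in oc S = x"
  unfolding eps_in_def
proof (rule antisym)
  have V0: "V0 \<in> Vc oc" using Vc by simp
  show "x \<le> Inf {a. S \<le> dasein_in oc a}"
  proof (rule Inf_greatest)
    fix a assume "a \<in> {a. S \<le> dasein_in oc a}"
    then have "kappa V0 x \<subseteq> kappa V0 (Sup {b \<in> V0. b \<le> a})"
      using le_funD[of S "dasein_in oc a" V0] V0 S unfolding dasein_in_def by simp
    then have "x \<le> Sup {b \<in> V0. b \<le> a}"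
      using kappa_subset_kappa_iff[OF oc V0 x Vc_memD(5)[OF V0 Collect_restrict]] by simp
    moreover have "Sup {b \<in> V0. b \<le> a} \<le> a" by (rule Sup_least) simp
    ultimately show "x \<le> a" by (rule order_trans)
  qed
  have "S \<le> dasein_in oc x"
  proof (rule le_funI)
    fix V show "S V \<le> dasein_in oc x V"
      using S S_outside dasein_in_eq_kappa[OF V0 x] by (cases "V = V0") auto
  qed
  then show "Inf {a. S \<le> dasein_in oc a} \<le> x" by (simp add: Inf_lower)
qed

lemma bullet_single_context:
  assumes oc: "ortho_compl oc" and Vc: "Vc oc = {V0}" and x: "x \<in> V0"
    and S: "S V0 = kappa V0 x"
  shows "bullet oc S V0 = sp V0 - S V0"
proof -
  have V0: "V0 \<in> Vc oc" using Vc by simp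
  have "eps_out oc S = x" by (rule eps_out_single_context[OF oc Vc x]) (rule S)
  then have "bullet oc S V0 = dasein_out oc (oc x) V0" unfolding bullet_def by simp
  also have "\<dots> = kappa V0 (oc x)" by (rule dasein_out_eq_kappa[OF V0 Vc_memD(3)[OF V0 x]])
  also have "\<dots> = sp V0 - S V0" using kappa_oc[OF oc V0 x] S by simp
  finally show ?thesis .
qed

lemma circ_single_context:
  assumes oc: "ortho_compl oc" and Vc: "Vc oc = {V0}" and x: "x \<in> V0"
    and S: "S V0 = kappa V0 x" and S_outside: "\<And>V. V \<noteq> V0 \<Longrightarrow> S V = {}"
  shows "circ oc S V0 = sp V0 - S V0"
proof -
  have V0: "V0 \<in> Vc oc" using Vc by simp
  have "eps_in oc S = x" by (rule eps_in_single_context[OF oc Vc x]) (fact S S_outside)+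
  then have "circ oc S V0 = dasein_in oc (oc x) V0" unfolding circ_def by simp
  also have "\<dots> = kappa V0 (oc x)" by (rule dasein_in_eq_kappa[OF V0 Vc_memD(3)[OF V0 x]])
  also have "\<dots> = sp V0 - S V0" using kappa_oc[OF oc V0 x] S by simp
  finally show ?thesis .
qed

lemma SubClop_outside:
  "S \<in> SubClop oc \<Longrightarrow> V \<notin> Vc oc \<Longrightarrow> S V = {}"
  unfolding SubClop_def by simp

lemma SubClop_subset_sp:
  "S \<in> SubClop oc \<Longrightarrow> V \<in> Vc oc \<Longrightarrow> S V \<subseteq> sp V"
  unfolding SubClop_def by simp

lemma ps_bot_in_SubClop: "ps_bot \<in> SubClop oc"
  unfolding SubClop_def ps_bot_def by simp

lemma sp_on_downclosed_in_SubClop: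
  assumes down: "\<And>V W. V \<subseteq> W \<Longrightarrow> P W \<Longrightarrow> P V"
  shows "(\<lambda>V. if V \<in> Vc oc \<and> P V then sp V else {}) \<in> SubClop oc"
  unfolding SubClop_def mem_Collect_eq
proof (intro conjI ballI allI impI)
  fix V assume V: "V \<in> Vc oc"
  have "topspace (stone_top V) = sp V" by (rule topspace_stone_top[OF Vc_memD(2)[OF V]])
  then show "openin (stone_top V) (if V \<in> Vc oc \<and> P V then sp V else {})"
    "closedin (stone_top V) (if V \<in> Vc oc \<and> P V then sp V else {})"
    by (metis openin_topspace openin_empty, metis closedin_topspace closedin_empty)
next
  fix V W l assume V: "V \<in> Vc oc" and VW: "V \<subseteq> W"
    and l: "l \<in> (if W \<in> Vc oc \<and> P W then sp W else {})"
  then have "P W" "l \<in> sp W" by (simp_all split: if_splits)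
  then show "restr V l \<in> (if V \<in> Vc oc \<and> P V then sp V else {})"
    using down[OF VW] V bounded_distrib_sublattice.restr_in_sp[OF Vc_bounded_distrib_sublattice[OF V] VW]
    by simp
qed simp_all

lemma ps_top_in_SubClop: "ps_top oc \<in> SubClop oc"
  using sp_on_downclosed_in_SubClop[where P = "\<lambda>_. True"] unfolding ps_top_def by simp

definition ps_below :: "('a::complete_lattice \<Rightarrow> 'a) \<Rightarrow> 'a set \<Rightarrow> 'a presheaf" where
  "ps_below oc V1 = (\<lambda>V. if V \<in> Vc oc \<and> V \<subseteq> V1 then sp V else {})"

lemma ps_below_in_SubClop: "ps_below oc V1 \<in> SubClop oc"
  unfolding ps_below_def by (rule sp_on_downclosed_in_SubClop) (rule subset_trans)

lemma Vc_subset_if_ps_below_eq_dasein_out: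
  assumes V1: "V1 \<in> Vc oc" and V2: "V2 \<in> Vc oc" and eq: "ps_below oc V1 = dasein_out oc c"
  shows "V2 \<subseteq> V1"
proof (rule ccontr)
  assume V21: "\<not> V2 \<subseteq> V1"
  interpret V1: bounded_distrib_sublattice V1 by (rule Vc_bounded_distrib_sublattice[OF V1])
  interpret V2: bounded_distrib_sublattice V2 by (rule Vc_bounded_distrib_sublattice[OF V2])
  let ?m = "Inf {b \<in> V2. c \<le> b}"
  have "kappa V2 ?m = {}"
    using fun_cong[OF eq, of V2] V2 V21 unfolding ps_below_def dasein_out_def by simp
  then have "?m = bot" using V2.kappa_eq_empty_iff[OF Vc_memD(4)[OF V2 Collect_restrict]] by simp
  moreover have "c \<le> ?m" by (rule Inf_greatest) simp
  ultimately have "c = bot" by (simp add: bot_unique)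
  then have "sp V1 = {}"
    using fun_cong[OF eq, of V1] V1 dasein_out_eq_kappa[OF V1 Vc_memD(1)[OF V1]]
    unfolding ps_below_def by (simp add: kappa_bot)
  then show False using V1.sp_ne_empty[OF Vc_bot_neq_top[OF V1]] by simp
qed

lemma Vc_subset_if_ps_below_eq_dasein_in:
  assumes oc: "ortho_compl oc" and V1: "V1 \<in> Vc oc" and V2: "V2 \<in> Vc oc"
    and eq: "ps_below oc V1 = dasein_in oc c"
  shows "V2 \<subseteq> V1"
proof (rule ccontr)
  assume V21: "\<not> V2 \<subseteq> V1"
  interpret V2: bounded_distrib_sublattice V2 by (rule Vc_bounded_distrib_sublattice[OF V2])
  let ?m = "Sup {b \<in> V1. b \<le> c}"
  have m: "?m \<in> V1" by (rule Vc_memD(5)[OF V1 Collect_restrict])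
  have "kappa V1 top \<subseteq> kappa V1 ?m"
    using fun_cong[OF eq, of V1] V1 unfolding ps_below_def dasein_in_def by (simp add: kappa_top)
  then have "top \<le> ?m" using kappa_subset_kappa_iff[OF oc V1 Vc_memD(2)[OF V1] m] by simp
  moreover have "?m \<le> c" by (rule Sup_least) simp
  ultimately have "c = top" by (simp add: top_unique)
  then have "sp V2 = {}"
    using fun_cong[OF eq, of V2] V2 V21 dasein_in_eq_kappa[OF V2 Vc_memD(2)[OF V2]]
    unfolding ps_below_def by (simp add: kappa_top)
  then show False using V2.sp_ne_empty[OF Vc_bot_neq_top[OF V2]] by simp
qed

lemma boolean_lattice_on_SubClop_if_complement:
  assumes DM: "de_morgan_algebra (SubClop oc) (\<le>) ps_meet ps_join N"
    and compl: "\<And>S V. S \<in> SubClop oc \<Longrightarrow> V \<in> Vc oc \<Longrightarrow> N S V = sp V - S V"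
  shows "boolean_lattice_on (SubClop oc) (\<le>) ps_meet ps_join ps_bot (ps_top oc) N"
proof -
  have dist: "distrib_lattice_on (SubClop oc) (\<le>) ps_meet ps_join"
    and closed: "\<forall>S\<in>SubClop oc. N S \<in> SubClop oc"
    and anti: "\<forall>S\<in>SubClop oc. \<forall>T\<in>SubClop oc. S \<le> T \<longrightarrow> N T \<le> N S"
    using DM unfolding de_morgan_algebra_def by auto
  have inv: "\<forall>S\<in>SubClop oc. N (N S) = S" using de_morgan_algebra_involutive[OF DM] by blast
  have bounds: "\<forall>S\<in>SubClop oc. ps_bot \<le> S \<and> S \<le> ps_top oc"
    unfolding ps_bot_def ps_top_def le_fun_def by (simp add: SubClop_subset_sp SubClop_outside)
  have at_context: "ps_meet S (N S) V = ps_bot V \<and> ps_join S (N S) V = ps_top oc V"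
    if S: "S \<in> SubClop oc" for S V
  proof (cases "V \<in> Vc oc")
    case True
    have "topspace (stone_top V) = sp V" by (rule topspace_stone_top[OF Vc_memD(2)[OF True]])
    moreover have "S V \<inter> N S V = {}" "S V \<union> N S V = sp V"
      using compl[OF S True] SubClop_subset_sp[OF S True] by auto
    ultimately show ?thesis using True unfolding ps_meet_def ps_join_def ps_bot_def ps_top_def
      by (metis interior_of_empty closure_of_topspace)
  next
    case False
    then show ?thesis using SubClop_outside[OF S False] SubClop_outside[OF bspec[OF closed S] False]
      unfolding ps_meet_def ps_join_def ps_bot_def ps_top_def by simp
  qed
  have "\<forall>S\<in>SubClop oc. ps_meet S (N S) = ps_bot" "\<forall>S\<in>SubClop oc. ps_join S (N S) = ps_top oc"
    using at_context by auto
  then show ?thesis unfolding boolean_lattice_on_def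
    using dist ps_bot_in_SubClop ps_top_in_SubClop bounds closed anti inv by (intro conjI) assumption+
qed

lemma boolean_lattice_on_bullet_if_de_morgan_algebra:
  assumes oc: "ortho_compl oc"
    and DM: "de_morgan_algebra (SubClop oc) (\<le>) ps_meet ps_join (bullet oc)"
  shows "boolean_lattice_on (SubClop oc) (\<le>) ps_meet ps_join ps_bot (ps_top oc) (bullet oc)"
proof -
  have dasein: "\<exists>c. S = dasein_out oc c" if "S \<in> SubClop oc" for S
    using de_morgan_algebra_involutive[OF DM that] unfolding bullet_def by metis
  have single: "Vc oc = {V}" if V: "V \<in> Vc oc" for V
  proof -
    have "W \<subseteq> V" "V \<subseteq> W" if W: "W \<in> Vc oc" for W
      using dasein[OF ps_below_in_SubClop[of oc V]] dasein[OF ps_below_in_SubClop[of oc W]]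
        Vc_subset_if_ps_below_eq_dasein_out[OF V W] Vc_subset_if_ps_below_eq_dasein_out[OF W V]
      by blast+
    then show ?thesis using V by blast
  qed
  show ?thesis
  proof (rule boolean_lattice_on_SubClop_if_complement[OF DM])
    fix S V assume S: "S \<in> SubClop oc" and V: "V \<in> Vc oc"
    obtain c where c: "S = dasein_out oc c" using dasein[OF S] by blast
    obtain x where "x \<in> V" "S V = kappa V x" using dasein_out_at_context[OF V] unfolding c by blast
    then show "bullet oc S V = sp V - S V" by (rule bullet_single_context[OF oc single[OF V]])
  qed
qed

lemma boolean_lattice_on_circ_if_de_morgan_algebra:
  assumes oc: "ortho_compl oc"
    and DM: "de_morgan_algebra (SubClop oc) (\<le>) ps_meet ps_join (circ oc)"
  shows "boolean_lattice_on (SubClop oc) (\<le>) ps_meet ps_join ps_bot (ps_top oc) (circ oc)"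
proof -
  have dasein: "\<exists>c. S = dasein_in oc c" if "S \<in> SubClop oc" for S
    using de_morgan_algebra_involutive[OF DM that] unfolding circ_def by metis
  have single: "Vc oc = {V}" if V: "V \<in> Vc oc" for V
  proof -
    have "W \<subseteq> V" "V \<subseteq> W" if W: "W \<in> Vc oc" for W
      using dasein[OF ps_below_in_SubClop[of oc V]] dasein[OF ps_below_in_SubClop[of oc W]]
        Vc_subset_if_ps_below_eq_dasein_in[OF oc V W] Vc_subset_if_ps_below_eq_dasein_in[OF oc W V]
      by blast+
    then show ?thesis using V by blast
  qed
  show ?thesis
  proof (rule boolean_lattice_on_SubClop_if_complement[OF DM])
    fix S V assume S: "S \<in> SubClop oc" and V: "V \<in> Vc oc"
    obtain c where c: "S = dasein_in oc c" using dasein[OF S] by blast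
    obtain x where "x \<in> V" "S V = kappa V x" using dasein_in_at_context[OF V] unfolding c by blast
    moreover have "S W = {}" if "W \<noteq> V" for W using SubClop_outside[OF S] single[OF V] that by blast
    ultimately show "circ oc S V = sp V - S V" by (rule circ_single_context[OF oc single[OF V]])
  qed
qed

theorem proposition8p1:
  fixes oc :: "'a::complete_lattice \<Rightarrow> 'a"
  assumes "ortho_compl oc"
  shows "(de_morgan_algebra (SubClop oc) (\<le>) ps_meet ps_join (bullet oc) \<longleftrightarrow>
            boolean_lattice_on (SubClop oc) (\<le>) ps_meet ps_join ps_bot (ps_top oc) (bullet oc)) \<and>
         (de_morgan_algebra (SubClop oc) (\<le>) ps_meet ps_join (circ oc) \<longleftrightarrow>
            boolean_lattice_on (SubClop oc) (\<le>) ps_meet ps_join ps_bot (ps_top oc) (circ oc))"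
  by (intro conjI iffI)
    (erule boolean_lattice_on_bullet_if_de_morgan_algebra[OF assms]
      boolean_lattice_on_circ_if_de_morgan_algebra[OF assms] de_morgan_algebra_if_boolean_lattice_on)+

end
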